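(* For all $\lambda\in[0,1]$ and all $i\neq j$, $k\in\{-1,1\}$, the functions $R_{i,j}^{(k)}$ satisfy $$R_{i,j}^{(k)}(\lambda)=\lambda\Big[p_{i,j}^{(k)}+\sum_{m\neq i,j}p_{i,m}^{(k)}R_{m,j}^{(k)}(\lambda)+\sum_{m\neq i}p_{i,m}^{(-k)}R_{m,i}^{(-k)}(\lambda)R_{i,j}^{(k)}(\lambda)\Big].$$
   Context: Fix an integer $N\ge 3$. Let $\mathcal G_N$ be the groupoid with object set $\{1,\dots,N\}$ generated by arrows $A_{i,j}^{(k)}$, $i\neq j\in\{1,\dots,N\}$, $k\in\{-1,1\}$, with source $i$ and target $j$, subject to the relations $A_{i,j}^{(k)}A_{j,\ell}^{(k)}=A_{i,\ell}^{(k)}$ for all $i,j,\ell$, $k$, with the convention $A_{i,i}^{(k)}:=e_i$ (unit at object $i$). Let $\mathcal A$ be its arrow set. Let $\{W_n\}_{n\ge0}$ be the Markov chain on $\mathcal A$ with $P(W_{n+1}=y\mid W_n=x)=p_{i,j}^{(k)}$ if $x^{-1}y=A_{i,j}^{(k)}$ with $i\ne j$ and $0$ otherwise, where $p_{i,j}^{(k)}\in(0,1)$ and $\sum_{j\ne i}\sum_{k=\pm1}p_{i,j}^{(k)}=1$ for each $i$; $P_x,E_x$ denote law and expectation with $W_0=x$. For $x\in\mathcal A$ let $T(0,x)=\inf\{n\ge0:W_n=W_0x\}$ (possibly $\infty$), and define $R_{i,j}^{(k)}(\lambda)=E_{e_i}[\lambda^{T(0,A_{i,j}^{(k)})}]=\sum_{n\ge0}P_{e_i}(T(0,A_{i,j}^{(k)})=n)\lambda^n$.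 *)

theory Defs
  imports Complex_Main
begin

text \<open>
  Arrows of the groupoid G_N are represented by words in the generators.
  A generator A_{a,b}^{(k)} (a \<noteq> b) applied after an arrow ending at a is
  recorded as the step (b,k).  A word starting at object i is a list of
  steps; its target is the last vertex visited.  Since every generator
  A_{a,b}^{(k)} has inverse A_{b,a}^{(k)} (by the relations), every arrow
  of G_N is represented by such a word, and two words represent the same
  arrow iff they are related by the congruence generated by the defining
  relations A_{a,b}^{(k)} A_{b,c}^{(k)} = A_{a,c}^{(k)} (with A_{a,a}^{(k)} = e_a).
\<close>

type_synonym step = "nat \<times> int"

definition last_vertex :: "nat \<Rightarrow> step list \<Rightarrow> nat" where
  "last_vertex i s = (if s = [] then i else fst (last s))"

definition valid_path :: "nat \<Rightarrow> nat \<Rightarrow> step list \<Rightarrow> bool" where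
  "valid_path N i s \<longleftrightarrow> i \<in> {1..N} \<and>
     (\<forall>t < length s. fst (s ! t) \<in> {1..N} \<and> snd (s ! t) \<in> {-1, 1} \<and>
        fst (s ! t) \<noteq> last_vertex i (take t s))"

text \<open>One application (inside a word) of a defining relation
  A_{a,b}^{(k)} A_{b,c}^{(k)} = A_{a,c}^{(k)}, where A_{a,a}^{(k)} = e_a.\<close>
definition grp_rel :: "nat \<Rightarrow> nat \<Rightarrow> step list \<Rightarrow> step list \<Rightarrow> bool" where
  "grp_rel N i u v \<longleftrightarrow> valid_path N i u \<and> valid_path N i v \<and>
     (\<exists>xs ys b c k. u = xs @ [(b, k), (c, k)] @ ys \<and>
        v = (if c = last_vertex i xs then xs @ ys else xs @ [(c, k)] @ ys))"

definition same_arrow :: "nat \<Rightarrow> nat \<Rightarrow> step list \<Rightarrow> step list \<Rightarrow> bool" where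
  "same_arrow N i = (\<lambda>x y. grp_rel N i x y \<or> grp_rel N i y x)\<^sup>*\<^sup>*"

definition path_prob :: "(nat \<Rightarrow> nat \<Rightarrow> int \<Rightarrow> real) \<Rightarrow> nat \<Rightarrow> step list \<Rightarrow> real" where
  "path_prob p i s = (\<Prod>t < length s. p (last_vertex i (take t s)) (fst (s ! t)) (snd (s ! t)))"

text \<open>P_{e_i}(T(0, A_{i,j}^{(k)}) = n): W_m = e_i \<cdot> (first m increments), and
  W_0 A_{i,j}^{(k)} = A_{i,j}^{(k)} is the word [(j,k)].\<close>
definition hit_prob :: "(nat \<Rightarrow> nat \<Rightarrow> int \<Rightarrow> real) \<Rightarrow> nat \<Rightarrow> nat \<Rightarrow> nat \<Rightarrow> int \<Rightarrow> nat \<Rightarrow> real" where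
  "hit_prob p N i j k n =
     (\<Sum>s \<in> {s. length s = n \<and> valid_path N i s \<and> same_arrow N i s [(j, k)] \<and>
               (\<forall>m < n. \<not> same_arrow N i (take m s) [(j, k)])}. path_prob p i s)"

definition R :: "(nat \<Rightarrow> nat \<Rightarrow> int \<Rightarrow> real) \<Rightarrow> nat \<Rightarrow> nat \<Rightarrow> nat \<Rightarrow> int \<Rightarrow> real \<Rightarrow> real" where
  "R p N i j k x = (\<Sum>n. hit_prob p N i j k n * x ^ n)"

end

theory Submission
  imports Defs
begin

text \<open>
  Within one colour k the relations make the generators a pair groupoid on {1..N}, so G_N is
  the free product of two pair groupoids: every arrow has a unique reduced word, one whose
  consecutive letters alternate in colour, and W_n is the reduction of the first n increments.

  Condition on the first step from e_i. The step A_{i,j}^{(k)} hits the target at once; a step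
  A_{i,m}^{(k)} with m \<noteq> j leaves the target A_{m,j}^{(k)}; a step A_{i,m}^{(-k)} leaves the
  reduced two-letter target A_{m,i}^{(-k)} A_{i,j}^{(k)}, which can only be reached by first
  reaching A_{m,i}^{(-k)} and then, by the strong Markov property, A_{i,j}^{(k)}. So the
  first-passage probabilities satisfy a convolution recursion, and their generating functions
  satisfy the identity. Partial sums of first-passage probabilities are at most 1 (by induction
  along the same recursion), so on [0,1] all series converge absolutely and Cauchy products apply.
\<close>

lemma all_take_append_iff:
  "(\<forall>m < length u + length v. P (take m (u @ v))) \<longleftrightarrow>
     (\<forall>m < length u. P (take m u)) \<and> (\<forall>m < length v. P (u @ take m v))"
proof (intro iffI conjI allI impI)
  fix m
  assume H: "\<forall>m < length u + length v. P (take m (u @ v))"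
  show "P (u @ take m v)" if "m < length v"
    using H[rule_format, of "length u + m"] that by simp
  show "P (take m u)" if "m < length u"
    using H[rule_format, of m] that by simp
next
  fix m
  assume "(\<forall>m < length u. P (take m u)) \<and> (\<forall>m < length v. P (u @ take m v))"
    and "m < length u + length v"
  then show "P (take m (u @ v))"
    by (cases "m < length u") (auto dest: spec[of _ "m - length u"])
qed

lemma inj_on_append_fixed_length:
  "(\<And>u. u \<in> A \<Longrightarrow> length u = a) \<Longrightarrow> inj_on (\<lambda>(u, v). u @ v) (A \<times> B)"
  by (rule inj_onI) (auto simp: append_eq_append_conv)

lemma sum_by_hd:
  assumes "finite S" "finite A" "\<And>s. s \<in> S \<Longrightarrow> s \<noteq> [] \<and> hd s \<in> A"
  shows "sum f S = (\<Sum>x\<in>A. \<Sum>t \<in> {t. x # t \<in> S}. f (x # t))"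
proof -
  have "sum f S = (\<Sum>x\<in>A. sum f {s \<in> S. hd s = x})"
    using assms by (intro sum.group[symmetric]) auto
  also have "\<dots> = (\<Sum>x\<in>A. \<Sum>t \<in> {t. x # t \<in> S}. f (x # t))"
  proof (rule sum.cong[OF refl])
    fix x
    have "{s \<in> S. hd s = x} = Cons x ` {t. x # t \<in> S}"
      using assms(3) by (auto intro!: rev_image_eqI[of "tl s" _ s for s])
    then show "sum f {s \<in> S. hd s = x} = (\<Sum>t \<in> {t. x # t \<in> S}. f (x # t))"
      by (simp add: sum.reindex)
  qed
  finally show ?thesis .
qed

lemma sum_row_split:
  fixes g :: "nat \<Rightarrow> int \<Rightarrow> 'a::comm_monoid_add"
  assumes "j \<in> {1..N}" "i \<noteq> j" "k \<in> {-1, 1}"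
  shows "(\<Sum>b\<in>{1..N} - {i}. \<Sum>k'\<in>{-1, 1}. g b k') =
    g j k + (\<Sum>b\<in>{1..N} - {i, j}. g b k) + (\<Sum>b\<in>{1..N} - {i}. g b (-k))"
proof -
  have "{-1, 1} = {k, -k}" "k \<noteq> -k"
    using assms(3) by auto
  then have "(\<Sum>b\<in>{1..N} - {i}. \<Sum>k'\<in>{-1, 1}. g b k') =
      (\<Sum>b\<in>{1..N} - {i}. g b k) + (\<Sum>b\<in>{1..N} - {i}. g b (-k))"
    by (simp add: sum.distrib[symmetric])
  moreover have "(\<Sum>b\<in>{1..N} - {i}. g b k) = g j k + (\<Sum>b\<in>{1..N} - {i, j}. g b k)"
  proof -
    have "{1..N} - {i, j} = {1..N} - {i} - {j}"
      by auto
    then show ?thesis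
      using assms(1,2) sum.remove[of "{1..N} - {i}" j "\<lambda>b. g b k"] by simp
  qed
  ultimately show ?thesis
    by simp
qed

lemma sum_convolution_le_product:
  fixes a b :: "nat \<Rightarrow> 'a::linordered_semidom"
  assumes "\<And>n. 0 \<le> a n" "\<And>n. 0 \<le> b n"
  shows "(\<Sum>n<M. \<Sum>i\<le>n. a i * b (n - i)) \<le> (\<Sum>i<M. a i) * (\<Sum>i<M. b i)"
proof -
  have "(\<Sum>n<M. \<Sum>i\<le>n. a i * b (n - i)) = (\<Sum>(i, l)\<in>{(i, l). i + l < M}. a i * b l)"
    by (rule sum.triangle_reindex[symmetric])
  also have "\<dots> \<le> (\<Sum>(i, l)\<in>{..<M} \<times> {..<M}. a i * b l)"
    by (rule sum_mono2) (auto intro: mult_nonneg_nonneg assms)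
  also have "\<dots> = (\<Sum>i<M. a i) * (\<Sum>i<M. b i)"
    by (simp add: sum_product sum.cartesian_product)
  finally show ?thesis .
qed

lemma convolution_power_sums:
  fixes a b :: "nat \<Rightarrow> 'a::{real_normed_field, banach}"
  assumes "summable (\<lambda>n. norm (a n * x ^ n))" "summable (\<lambda>n. norm (b n * x ^ n))"
  shows "(\<lambda>n. (\<Sum>i\<le>n. a i * b (n - i)) * x ^ n) sums ((\<Sum>n. a n * x ^ n) * (\<Sum>n. b n * x ^ n))"
proof -
  have "(\<Sum>i\<le>n. a i * b (n - i)) * x ^ n = (\<Sum>i\<le>n. (a i * x ^ i) * (b (n - i) * x ^ (n - i)))" for n
    unfolding sum_distrib_right
    by (intro sum.cong refl) (simp add: mult_ac flip: power_add)
  then show ?thesis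
    using Cauchy_product_sums[OF assms] by simp
qed

section \<open>Words and paths\<close>

lemma last_vertex_Nil [simp]: "last_vertex i [] = i"
  by (simp add: last_vertex_def)

lemma last_vertex_snoc [simp]: "last_vertex i (xs @ [x]) = fst x"
  by (simp add: last_vertex_def)

lemma last_vertex_Cons [simp]: "last_vertex i (x # xs) = last_vertex (fst x) xs"
  by (simp add: last_vertex_def)

lemma last_vertex_append: "last_vertex i (xs @ ys) = last_vertex (last_vertex i xs) ys"
  by (simp add: last_vertex_def)

lemma valid_path_Nil [simp]: "valid_path N i [] \<longleftrightarrow> i \<in> {1..N}"
  by (simp add: valid_path_def)

lemma valid_path_Cons:
  "valid_path N i (x # xs) \<longleftrightarrow>
     i \<in> {1..N} \<and> fst x \<in> {1..N} \<and> snd x \<in> {-1, 1} \<and> fst x \<noteq> i \<and> valid_path N (fst x) xs"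
proof -
  have "(\<forall>t < length (x # xs). P t) \<longleftrightarrow> P 0 \<and> (\<forall>t < length xs. P (Suc t))" for P
    by (auto simp: less_Suc_eq_0_disj)
  then show ?thesis
    unfolding valid_path_def by auto
qed

lemma valid_path_start: "valid_path N i s \<Longrightarrow> i \<in> {1..N}"
  by (simp add: valid_path_def)

lemma valid_path_append:
  "valid_path N i (xs @ ys) \<longleftrightarrow> valid_path N i xs \<and> valid_path N (last_vertex i xs) ys"
  by (induction xs arbitrary: i) (auto simp: valid_path_Cons dest: valid_path_start)

lemma valid_path_last_vertex: "valid_path N i xs \<Longrightarrow> last_vertex i xs \<in> {1..N}"
  by (induction xs arbitrary: i) (auto simp: valid_path_Cons)

lemma valid_path_snoc:
  "valid_path N i (xs @ [x]) \<longleftrightarrow>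
     valid_path N i xs \<and> fst x \<in> {1..N} \<and> snd x \<in> {-1, 1} \<and> fst x \<noteq> last_vertex i xs"
  using valid_path_last_vertex[of N i xs] by (auto simp: valid_path_append valid_path_Cons)

lemma valid_path_take: "valid_path N i s \<Longrightarrow> valid_path N i (take m s)"
  by (metis append_take_drop_id valid_path_append)

lemma valid_path_steps: "valid_path N i s \<Longrightarrow> set s \<subseteq> {1..N} \<times> {-1, 1}"
  by (induction s arbitrary: i) (auto simp: valid_path_Cons mem_Times_iff)

lemma path_prob_Nil [simp]: "path_prob p i [] = 1"
  by (simp add: path_prob_def)

lemma path_prob_Cons [simp]: "path_prob p i (x # xs) = p i (fst x) (snd x) * path_prob p (fst x) xs"
  unfolding path_prob_def by (simp del: prod.lessThan_Suc add: prod.lessThan_Suc_shift)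

lemma path_prob_append:
  "path_prob p i (xs @ ys) = path_prob p i xs * path_prob p (last_vertex i xs) ys"
  by (induction xs arbitrary: i) auto

lemma same_arrow_symclp: "same_arrow N i = (symclp (grp_rel N i))\<^sup>*\<^sup>*"
  unfolding same_arrow_def symclp_def ..

lemma same_arrow_refl [simp]: "same_arrow N i u u"
  by (simp add: same_arrow_def)

lemma same_arrow_sym: "same_arrow N i u v \<Longrightarrow> same_arrow N i v u"
  unfolding same_arrow_symclp by (rule rtranclp_symclp_sym)

lemma same_arrow_trans: "same_arrow N i u v \<Longrightarrow> same_arrow N i v w \<Longrightarrow> same_arrow N i u w"
  unfolding same_arrow_def by (rule rtranclp_trans)

lemma grp_rel_same_arrow: "grp_rel N i u v \<Longrightarrow> same_arrow N i u v"
  unfolding same_arrow_def by auto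

lemma grp_rel_last_vertex: "grp_rel N i u v \<Longrightarrow> last_vertex i u = last_vertex i v"
  unfolding grp_rel_def by (auto simp: last_vertex_append)

lemma grp_rel_valid: "grp_rel N i u v \<Longrightarrow> valid_path N i u \<and> valid_path N i v"
  unfolding grp_rel_def by blast

lemma same_arrow_valid_last_vertex:
  "same_arrow N i u v \<Longrightarrow> valid_path N i u \<Longrightarrow> valid_path N i v \<and> last_vertex i u = last_vertex i v"
  unfolding same_arrow_symclp
proof (induction rule: rtranclp_induct)
  case (step v w)
  from step.hyps(2) show ?case
    using step.IH step.prems by cases (auto dest: grp_rel_last_vertex grp_rel_valid)
qed simp

lemma grp_rel_snoc:
  assumes "grp_rel N i u v" "valid_path N i (u @ [x])" "valid_path N i (v @ [x])"
  shows "grp_rel N i (u @ [x]) (v @ [x])"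
proof -
  from assms(1) obtain xs ys b c k where "u = xs @ [(b, k), (c, k)] @ ys"
    and "v = (if c = last_vertex i xs then xs @ ys else xs @ [(c, k)] @ ys)"
    unfolding grp_rel_def by blast
  then have "u @ [x] = xs @ [(b, k), (c, k)] @ (ys @ [x])"
    and "v @ [x] = (if c = last_vertex i xs then xs @ (ys @ [x]) else xs @ [(c, k)] @ (ys @ [x]))"
    by auto
  with assms(2,3) show ?thesis
    unfolding grp_rel_def by blast
qed

lemma same_arrow_snoc:
  assumes "same_arrow N i u v" "valid_path N i (u @ [x])"
  shows "same_arrow N i (u @ [x]) (v @ [x])"
proof -
  have valid: "valid_path N i (y @ [x])" if "same_arrow N i u y" for y
    using same_arrow_valid_last_vertex[OF that] assms(2) by (auto simp: valid_path_snoc)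
  from assms(1) show ?thesis
    unfolding same_arrow_symclp
  proof (induction rule: rtranclp_induct)
    case (step v w)
    then have "valid_path N i (v @ [x])" "valid_path N i (w @ [x])"
      using valid unfolding same_arrow_symclp by (auto intro: rtranclp.rtrancl_into_rtrancl)
    with step.hyps(2) have "symclp (grp_rel N i) (v @ [x]) (w @ [x])"
      by (auto elim!: symclpE intro: symclpI1 symclpI2 grp_rel_snoc)
    with step.IH show ?case by auto
  qed simp
qed

lemma grp_rel_Cons:
  assumes "grp_rel N (fst x) u v" "valid_path N i [x]"
  shows "grp_rel N i (x # u) (x # v)"
proof -
  from assms(1) obtain xs ys b c k where "u = xs @ [(b, k), (c, k)] @ ys"
    and "v = (if c = last_vertex (fst x) xs then xs @ ys else xs @ [(c, k)] @ ys)"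
    unfolding grp_rel_def by blast
  then have "x # u = (x # xs) @ [(b, k), (c, k)] @ ys"
    and "x # v = (if c = last_vertex i (x # xs) then (x # xs) @ ys else (x # xs) @ [(c, k)] @ ys)"
    by auto
  moreover have "valid_path N i (x # u)" "valid_path N i (x # v)"
    using assms grp_rel_valid[OF assms(1)] by (auto simp: valid_path_Cons)
  ultimately show ?thesis
    unfolding grp_rel_def by blast
qed

lemma same_arrow_Cons:
  assumes "same_arrow N (fst x) u v" "valid_path N i [x]"
  shows "same_arrow N i (x # u) (x # v)"
  using assms(1) unfolding same_arrow_symclp
proof (induction rule: rtranclp_induct)
  case (step v w)
  from step.hyps(2) have "symclp (grp_rel N i) (x # v) (x # w)"
    by (auto elim!: symclpE intro: symclpI1 symclpI2 grp_rel_Cons assms(2))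
  with step.IH show ?case by auto
qed simp

lemma grp_rel_cancel:
  assumes "valid_path N b ((i, k) # (b, k) # u)"
  shows "grp_rel N b ((i, k) # (b, k) # u) u"
proof -
  have "(i, k) # (b, k) # u = [] @ [(i, k), (b, k)] @ u"
    and "u = (if b = last_vertex b [] then [] @ u else [] @ [(b, k)] @ u)"
    by simp_all
  moreover have "valid_path N b u"
    using assms by (simp add: valid_path_Cons)
  ultimately show ?thesis
    using assms unfolding grp_rel_def by blast
qed

definition reduce_step :: "nat \<Rightarrow> step list \<Rightarrow> step \<Rightarrow> step list" where
  "reduce_step i w x =
     (if w \<noteq> [] \<and> snd (last w) = snd x then
        if fst x = last_vertex i (butlast w) then butlast w else butlast w @ [x]
      else w @ [x])"

definition reduce :: "nat \<Rightarrow> step list \<Rightarrow> step list" where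
  "reduce i = foldl (reduce_step i) []"

abbreviation alternating :: "step list \<Rightarrow> bool" where
  "alternating \<equiv> successively (\<lambda>x y. snd x \<noteq> snd y)"

lemma reduce_Nil [simp]: "reduce i [] = []"
  by (simp add: reduce_def)

lemma reduce_snoc: "reduce i (s @ [x]) = reduce_step i (reduce i s) x"
  by (simp add: reduce_def)

lemma reduce_append: "reduce i (u @ v) = foldl (reduce_step i) (reduce i u) v"
  by (simp add: reduce_def)

lemma reduce_append_cong: "reduce i u = reduce i u' \<Longrightarrow> reduce i (u @ v) = reduce i (u' @ v)"
  by (simp add: reduce_append)

lemma reduce_single [simp]: "reduce i [x] = [x]"
  by (simp add: reduce_def reduce_step_def)

lemma reduce_pair:
  "reduce i [x, y] = (if snd x = snd y then if fst y = i then [] else [y] else [x, y])"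
  by (simp add: reduce_def reduce_step_def)

lemma alternating_snoc:
  "alternating (w @ [x]) \<longleftrightarrow> alternating w \<and> (w \<noteq> [] \<longrightarrow> snd (last w) \<noteq> snd x)"
  by (auto simp: successively_append_iff)

section \<open>Reduced words\<close>

text \<open>A letter of the same colour as the last one merges with it, since
  A_{a,b}^{(k)} A_{b,c}^{(k)} = A_{a,c}^{(k)}, and cancels it when c = a.\<close>

lemma reduce_step_invariant:
  assumes "valid_path N i w" "alternating w" "valid_path N i (w @ [x])"
  shows "valid_path N i (reduce_step i w x) \<and> alternating (reduce_step i w x)
    \<and> last_vertex i (reduce_step i w x) = fst x"
proof (cases "w \<noteq> [] \<and> snd (last w) = snd x")
  case True
  then obtain w0 y where w: "w = w0 @ [y]"
    by (metis rev_exhaust)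
  have "fst x \<in> {1..N}" "snd x \<in> {-1, 1}"
    using assms(3) by (simp_all add: valid_path_snoc)
  moreover have "valid_path N i w0" "alternating w0" "w0 \<noteq> [] \<longrightarrow> snd (last w0) \<noteq> snd y"
    "snd y = snd x"
    using assms True by (simp_all add: w valid_path_snoc alternating_snoc)
  ultimately show ?thesis
    using True by (auto simp: reduce_step_def w valid_path_snoc alternating_snoc)
next
  case False
  then show ?thesis
    using assms by (auto simp: reduce_step_def valid_path_snoc alternating_snoc)
qed

lemma reduce_invariant:
  "valid_path N i s \<Longrightarrow>
     valid_path N i (reduce i s) \<and> alternating (reduce i s) \<and> last_vertex i (reduce i s) = last_vertex i s"
proof (induction s rule: rev_induct)
  case (snoc x s)
  then show ?case
    using reduce_step_invariant[of N i "reduce i s" x] by (auto simp: reduce_snoc valid_path_snoc)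
qed simp

lemma reduce_step_merge:
  assumes "valid_path N i w" "alternating w" "b \<noteq> last_vertex i w" "c \<noteq> b"
  shows "reduce_step i (reduce_step i w (b, k)) (c, k) =
    (if c = last_vertex i w then w else reduce_step i w (c, k))"
proof (cases "w \<noteq> [] \<and> snd (last w) = k")
  case True
  then obtain w0 y where w: "w = w0 @ [y]"
    by (metis rev_exhaust)
  have "w0 \<noteq> [] \<longrightarrow> snd (last w0) \<noteq> snd y" "snd y = k" "fst y \<noteq> last_vertex i w0"
    using assms True by (auto simp: w valid_path_snoc alternating_snoc)
  then show ?thesis
    using assms True by (cases y) (auto simp: reduce_step_def w)
next
  case False
  then show ?thesis
    using assms by (auto simp: reduce_step_def)
qed

lemma grp_rel_reduce_eq:
  assumes "grp_rel N i u v"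
  shows "reduce i u = reduce i v"
proof -
  obtain xs ys b c k where u: "u = xs @ [(b, k), (c, k)] @ ys"
    and v: "v = (if c = last_vertex i xs then xs @ ys else xs @ [(c, k)] @ ys)"
    and valid: "valid_path N i u"
    using assms unfolding grp_rel_def by blast
  have "valid_path N i xs" "b \<noteq> last_vertex i xs" "c \<noteq> b"
    using valid by (auto simp: u valid_path_append valid_path_Cons)
  then have "reduce_step i (reduce_step i (reduce i xs) (b, k)) (c, k) =
      (if c = last_vertex i xs then reduce i xs else reduce_step i (reduce i xs) (c, k))"
    using reduce_step_merge[of N i "reduce i xs" b c k] reduce_invariant[of N i xs] by simp
  then show ?thesis
    unfolding u v by (simp add: reduce_append)
qed

lemma same_arrow_reduce_eq: "same_arrow N i u v \<Longrightarrow> reduce i u = reduce i v"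
  unfolding same_arrow_def by (induction rule: rtranclp_induct) (auto dest: grp_rel_reduce_eq)

lemma same_arrow_reduce_step:
  assumes "valid_path N i w" "alternating w" "valid_path N i (w @ [x])"
  shows "same_arrow N i (w @ [x]) (reduce_step i w x)"
proof (cases "w \<noteq> [] \<and> snd (last w) = snd x")
  case True
  then obtain w0 y where w: "w = w0 @ [y]" and y: "snd y = snd x"
    by (metis rev_exhaust last_snoc)
  have "w @ [x] = w0 @ [(fst y, snd x), (fst x, snd x)] @ []"
    and "reduce_step i w x =
      (if fst x = last_vertex i w0 then w0 @ [] else w0 @ [(fst x, snd x)] @ [])"
    using y by (auto simp: reduce_step_def w prod_eq_iff)
  moreover have "valid_path N i (reduce_step i w x)"
    using reduce_step_invariant[OF assms] by blast
  ultimately have "grp_rel N i (w @ [x]) (reduce_step i w x)"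
    using assms(3) unfolding grp_rel_def by blast
  then show ?thesis
    by (rule grp_rel_same_arrow)
next
  case False
  then show ?thesis
    by (auto simp: reduce_step_def)
qed

lemma same_arrow_reduce: "valid_path N i s \<Longrightarrow> same_arrow N i s (reduce i s)"
proof (induction s rule: rev_induct)
  case (snoc x s)
  then have "valid_path N i s" "valid_path N i (reduce i s @ [x])"
    using reduce_invariant[of N i s] by (auto simp: valid_path_snoc)
  then have "same_arrow N i (s @ [x]) (reduce i s @ [x])"
    and "same_arrow N i (reduce i s @ [x]) (reduce i (s @ [x]))"
    using snoc same_arrow_snoc same_arrow_reduce_step reduce_invariant
    by (auto simp: reduce_snoc)
  then show ?case
    by (rule same_arrow_trans)
qed simp

lemma same_arrow_iff_reduce_eq:
  "valid_path N i u \<Longrightarrow> valid_path N i v \<Longrightarrow> same_arrow N i u v \<longleftrightarrow> reduce i u = reduce i v"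
  by (metis same_arrow_reduce_eq same_arrow_reduce same_arrow_sym same_arrow_trans)

text \<open>Left cancellation, via the inverse A_{b,i}^{(k)} of x = A_{i,b}^{(k)}.\<close>

lemma reduce_Cons_eq_iff:
  assumes "valid_path N i (x # u)" "valid_path N i (x # v)"
  shows "reduce i (x # u) = reduce i (x # v) \<longleftrightarrow> reduce (fst x) u = reduce (fst x) v"
proof -
  obtain b k where x: "x = (b, k)"
    by fastforce
  have valid: "valid_path N i [x]" "valid_path N b u" "valid_path N b v"
    "valid_path N b [(i, k)]"
    using assms by (auto simp: valid_path_Cons x)
  have "same_arrow N i (x # u) (x # v) \<longleftrightarrow> same_arrow N b u v"
  proof
    assume "same_arrow N i (x # u) (x # v)"
    then have "same_arrow N b ((i, k) # x # u) ((i, k) # x # v)"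
      using same_arrow_Cons valid(4) by fastforce
    moreover have "same_arrow N b ((i, k) # (b, k) # w) w" if "valid_path N b w" for w
      using that valid by (intro grp_rel_same_arrow grp_rel_cancel) (simp add: x valid_path_Cons)
    ultimately show "same_arrow N b u v"
      using valid x by (meson same_arrow_sym same_arrow_trans)
  next
    assume "same_arrow N b u v"
    then show "same_arrow N i (x # u) (x # v)"
      using same_arrow_Cons valid(1) x by fastforce
  qed
  then show ?thesis
    using same_arrow_iff_reduce_eq assms valid x by auto
qed

lemma reduce_step_Cons_Cons:
  assumes "reduce_step i w z = x # y # r"
  shows "w \<noteq> [] \<and> hd w = x"
proof (cases w rule: rev_cases)
  case Nil
  with assms show ?thesis
    by (simp add: reduce_step_def)
next
  case (snoc w0 y0)
  then have "x # y # r \<in> {w0, w0 @ [z], w0 @ [y0, z]}"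
    using assms unfolding snoc reduce_step_def by (auto split: if_splits)
  then show ?thesis
    using snoc by (cases w0) auto
qed

lemma ex_take_reduce_eq_hd:
  "reduce b t = x # y # r \<Longrightarrow> \<exists>m \<le> length t. reduce b (take m t) = [x]"
proof (induction t arbitrary: y r rule: rev_induct)
  case (snoc z t)
  have "reduce b t \<noteq> [] \<and> hd (reduce b t) = x"
    using snoc.prems reduce_step_Cons_Cons[of b "reduce b t" z x y r] by (simp add: reduce_snoc)
  then consider "reduce b t = [x]" | y' r' where "reduce b t = x # y' # r'"
    by (cases "reduce b t" rule: remdups_adj.cases) auto
  then show ?case
  proof cases
    case 1
    then show ?thesis
      by (intro exI[of _ "length t"]) simp
  next
    case 2
    then obtain m where "m \<le> length t" "reduce b (take m t) = [x]"
      using snoc.IH by blast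
    then show ?thesis
      by (intro exI[of _ m]) simp
  qed
qed simp

definition first_passages :: "nat \<Rightarrow> nat \<Rightarrow> step list \<Rightarrow> nat \<Rightarrow> step list set" where
  "first_passages N i w n =
     {s. length s = n \<and> valid_path N i s \<and> reduce i s = w \<and> (\<forall>m < n. reduce i (take m s) \<noteq> w)}"

lemma finite_first_passages: "finite (first_passages N i w n)"
proof (rule finite_subset)
  show "first_passages N i w n \<subseteq> {s. set s \<subseteq> {1..N} \<times> {-1, 1} \<and> length s = n}"
    unfolding first_passages_def using valid_path_steps by blast
qed (simp add: finite_lists_length_eq)

section \<open>First passages\<close>

lemma first_passages_0: "w \<noteq> [] \<Longrightarrow> first_passages N i w 0 = {}"
  by (auto simp: first_passages_def)

lemma hit_prob_eq_first_passages:
  assumes "valid_path N i [(j, k)]"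
  shows "hit_prob p N i j k n = sum (path_prob p i) (first_passages N i [(j, k)] n)"
proof -
  have "valid_path N i s \<Longrightarrow> same_arrow N i s [(j, k)] \<longleftrightarrow> reduce i s = [(j, k)]" for s
    using same_arrow_iff_reduce_eq[OF _ assms] by simp
  then have "{s. length s = n \<and> valid_path N i s \<and> same_arrow N i s [(j, k)] \<and>
      (\<forall>m < n. \<not> same_arrow N i (take m s) [(j, k)])} = first_passages N i [(j, k)] n"
    unfolding first_passages_def using valid_path_take by blast
  then show ?thesis
    unfolding hit_prob_def by simp
qed

lemma first_passages_Cons:
  assumes valid: "valid_path N i (x # v)" and w: "reduce i (x # v) = w" "w \<noteq> []"
  shows "{t. x # t \<in> first_passages N i w (Suc n)} = first_passages N (fst x) (reduce (fst x) v) n"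
proof -
  have valid_Cons: "valid_path N i (x # u) \<longleftrightarrow> valid_path N (fst x) u" for u
    using valid by (simp add: valid_path_Cons)
  have reduce_Cons: "reduce i (x # u) = w \<longleftrightarrow> reduce (fst x) u = reduce (fst x) v"
    if "valid_path N (fst x) u" for u
    using reduce_Cons_eq_iff[of N i x u v] valid valid_Cons that w by simp
  have prefixes: "(\<forall>m < Suc n. reduce i (take m (x # t)) \<noteq> w) \<longleftrightarrow>
      (\<forall>m < n. reduce (fst x) (take m t) \<noteq> reduce (fst x) v)"
    if "valid_path N (fst x) t" for t
    using w(2) reduce_Cons[OF valid_path_take[OF that]] by (simp add: All_less_Suc2)
  have "x # t \<in> first_passages N i w (Suc n) \<longleftrightarrow> t \<in> first_passages N (fst x) (reduce (fst x) v) n"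
    for t
  proof (cases "valid_path N (fst x) t")
    case True
    then show ?thesis
      using prefixes[OF True] reduce_Cons[OF True] valid_Cons unfolding first_passages_def by simp
  next
    case False
    then show ?thesis
      using valid_Cons unfolding first_passages_def by simp
  qed
  then show ?thesis
    by blast
qed

lemma first_passages_single_Cons:
  "valid_path N i [x] \<Longrightarrow> {t. x # t \<in> first_passages N i [x] (Suc n)} = (if n = 0 then {[]} else {})"
  by (cases n) (auto simp: first_passages_def)

lemma first_passages_take_unique:
  assumes "take a t \<in> first_passages N b w a" "take a' t \<in> first_passages N b w a'"
  shows "a = a'"
proof (rule ccontr)
  assume "a \<noteq> a'"
  then consider "a < a'" | "a' < a" by linarith
  then show False
  proof cases
    case 1
    then have "reduce b (take a (take a' t)) = w"
      using assms(1) by (simp add: first_passages_def min_absorb1)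
    then show False
      using assms(2) 1 by (simp add: first_passages_def)
  next
    case 2
    then have "reduce b (take a' (take a t)) = w"
      using assms(2) by (simp add: first_passages_def min_absorb2)
    then show False
      using assms(1) 2 by (simp add: first_passages_def)
  qed
qed

lemma reduce_append_eq_iff:
  assumes "valid_path N b u" "reduce b u = [x]" "valid_path N (fst x) v" "valid_path N b (x # v0)"
  shows "reduce b (u @ v) = reduce b (x # v0) \<longleftrightarrow> reduce (fst x) v = reduce (fst x) v0"
proof -
  have "reduce b (u @ v) = reduce b (x # v)"
    using reduce_append_cong[of b u "[x]" v] assms(2) by simp
  moreover have "valid_path N b (x # v)"
    using assms(3,4) by (simp add: valid_path_Cons)
  ultimately show ?thesis
    using reduce_Cons_eq_iff[OF _ assms(4)] by simp
qed

lemma first_passages_take_reduce_ne: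
  assumes "u \<in> first_passages N b [x] a" "m < a"
  shows "reduce b (take m u) \<noteq> x # y # r"
proof
  assume "reduce b (take m u) = x # y # r"
  then obtain m' where "m' \<le> m" "reduce b (take m' u) = [x]"
    using ex_take_reduce_eq_hd by fastforce
  then show False
    using assms by (simp add: first_passages_def)
qed

lemma first_passages_append_iff:
  assumes valid: "valid_path N b (x # v0)" and reduced: "reduce b (x # v0) = x # y # r"
    and u: "u \<in> first_passages N b [x] a"
  shows "u @ v \<in> first_passages N b (x # y # r) (a + length v) \<longleftrightarrow>
    v \<in> first_passages N (fst x) (reduce (fst x) v0) (length v)"
proof -
  have u_len: "length u = a" and u_valid: "valid_path N b u" and u_reduce: "reduce b u = [x]"
    using u by (simp_all add: first_passages_def)
  have valid_append: "valid_path N b (u @ v') \<longleftrightarrow> valid_path N (fst x) v'" for v'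
    using u_valid reduce_invariant[OF u_valid] u_reduce by (simp add: valid_path_append)
  have reduce_append: "reduce b (u @ v') = x # y # r \<longleftrightarrow> reduce (fst x) v' = reduce (fst x) v0"
    if "valid_path N (fst x) v'" for v'
    using reduce_append_eq_iff[OF u_valid u_reduce that valid] reduced by simp
  show ?thesis
  proof (cases "valid_path N (fst x) v")
    case True
    then have "(\<forall>m < length v. reduce b (u @ take m v) \<noteq> x # y # r) \<longleftrightarrow>
        (\<forall>m < length v. reduce (fst x) (take m v) \<noteq> reduce (fst x) v0)"
      using reduce_append valid_path_take by simp
    moreover have "\<forall>m < a. reduce b (take m u) \<noteq> x # y # r"
      using first_passages_take_reduce_ne[OF u] by blast
    ultimately show ?thesis
      using all_take_append_iff[of u v "\<lambda>s. reduce b s \<noteq> x # y # r"] True reduce_append[OF True]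
        valid_append u_len
      unfolding first_passages_def by simp
  next
    case False
    then show ?thesis
      using valid_append unfolding first_passages_def by simp
  qed
qed

lemma first_passages_head_passage:
  assumes "t \<in> first_passages N b (x # y # r) n"
  obtains a where "a \<le> n" "take a t \<in> first_passages N b [x] a"
proof -
  let ?P = "\<lambda>a. reduce b (take a t) = [x]"
  have t: "length t = n" "valid_path N b t" "reduce b t = x # y # r"
    using assms by (simp_all add: first_passages_def)
  then obtain m where m: "m \<le> n" "?P m"
    using ex_take_reduce_eq_hd by blast
  define a where "a = (LEAST a. ?P a)"
  have "?P a" "a \<le> m"
    unfolding a_def using m(2) by (auto intro: LeastI Least_le)
  moreover have "\<not> ?P m'" if "m' < a" for m'
    using that not_less_Least unfolding a_def by blast
  ultimately have "a \<le> n" "take a t \<in> first_passages N b [x] a"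
    using m(1) t(1) valid_path_take[OF t(2)] by (auto simp: first_passages_def min_absorb1)
  then show ?thesis
    using that by blast
qed

lemma first_passages_decompose:
  assumes valid: "valid_path N b (x # v0)" and reduced: "reduce b (x # v0) = x # y # r"
  shows "first_passages N b (x # y # r) n =
    (\<Union>a\<le>n. (\<lambda>(u, v). u @ v) `
       (first_passages N b [x] a \<times> first_passages N (fst x) (reduce (fst x) v0) (n - a)))"
    (is "?F = (\<Union>a\<le>n. ?concat ` ?pairs a)")
proof (intro set_eqI iffI)
  fix t
  assume "t \<in> ?F"
  then obtain a where a: "a \<le> n" "take a t \<in> first_passages N b [x] a"
    by (rule first_passages_head_passage)
  have "length t = n"
    using \<open>t \<in> ?F\<close> by (simp add: first_passages_def)
  then have "drop a t \<in> first_passages N (fst x) (reduce (fst x) v0) (n - a)"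
    using first_passages_append_iff[OF valid reduced a(2), of "drop a t"] \<open>t \<in> ?F\<close> a(1) by simp
  then have "(take a t, drop a t) \<in> ?pairs a"
    using a(2) by simp
  then have "t \<in> ?concat ` ?pairs a"
    by (rule rev_image_eqI) simp
  then show "t \<in> (\<Union>a\<le>n. ?concat ` ?pairs a)"
    using a(1) by blast
next
  fix t
  assume "t \<in> (\<Union>a\<le>n. ?concat ` ?pairs a)"
  then obtain a u v where a: "a \<le> n" and t: "t = u @ v" and u: "u \<in> first_passages N b [x] a"
    and v: "v \<in> first_passages N (fst x) (reduce (fst x) v0) (n - a)"
    by auto
  have "length v = n - a"
    using v by (simp add: first_passages_def)
  then show "t \<in> ?F"
    using first_passages_append_iff[OF valid reduced u, of v] v a t by simp
qed

text \<open>Strong Markov property at the first passage through x.\<close>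

lemma sum_first_passages_decompose:
  assumes valid: "valid_path N b (x # v0)" and reduced: "reduce b (x # v0) = x # y # r"
  shows "sum (path_prob p b) (first_passages N b (x # y # r) n) =
    (\<Sum>a\<le>n. sum (path_prob p b) (first_passages N b [x] a) *
       sum (path_prob p (fst x)) (first_passages N (fst x) (reduce (fst x) v0) (n - a)))"
proof -
  let ?concat = "\<lambda>(u, v). u @ v :: step list"
  let ?pairs = "\<lambda>a. first_passages N b [x] a \<times> first_passages N (fst x) (reduce (fst x) v0) (n - a)"
  have take_passage: "take a t \<in> first_passages N b [x] a" if "t \<in> ?concat ` ?pairs a" for t a
    using that by (auto simp: first_passages_def)
  have disjoint: "?concat ` ?pairs a \<inter> ?concat ` ?pairs a' = {}" if "a \<noteq> a'" for a a'
  proof (rule ccontr)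
    assume "?concat ` ?pairs a \<inter> ?concat ` ?pairs a' \<noteq> {}"
    then obtain t where "t \<in> ?concat ` ?pairs a" "t \<in> ?concat ` ?pairs a'"
      by blast
    then have "take a t \<in> first_passages N b [x] a" "take a' t \<in> first_passages N b [x] a'"
      by (simp_all add: take_passage)
    then have "a = a'"
      by (rule first_passages_take_unique)
    with that show False ..
  qed
  have inj: "inj_on ?concat (?pairs a)" for a
    by (rule inj_on_append_fixed_length) (simp add: first_passages_def)
  have path_prob_concat: "path_prob p b (u @ v) = path_prob p b u * path_prob p (fst x) v"
    if "u \<in> first_passages N b [x] a" for u v a
    using that reduce_invariant[of N b u] by (simp add: first_passages_def path_prob_append)
  have "sum (path_prob p b) (first_passages N b (x # y # r) n) =
      (\<Sum>a\<le>n. sum (path_prob p b) (?concat ` ?pairs a))"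
    unfolding first_passages_decompose[OF valid reduced]
    by (rule sum.UNION_disjoint) (auto simp: finite_first_passages disjoint)
  also have "\<dots> = (\<Sum>a\<le>n. \<Sum>(u, v)\<in>?pairs a. path_prob p b u * path_prob p (fst x) v)"
    by (intro sum.cong refl) (auto simp: sum.reindex[OF inj] path_prob_concat intro!: sum.cong)
  also have "\<dots> = (\<Sum>a\<le>n. sum (path_prob p b) (first_passages N b [x] a) *
       sum (path_prob p (fst x)) (first_passages N (fst x) (reduce (fst x) v0) (n - a)))"
    by (simp add: sum_product sum.cartesian_product)
  finally show ?thesis .
qed

lemma sum_first_passages_Suc:
  "sum (path_prob p i) (first_passages N i w (Suc n)) =
    (\<Sum>b\<in>{1..N} - {i}. \<Sum>k\<in>{-1, 1}.
       p i b k * sum (path_prob p b) {t. (b, k) # t \<in> first_passages N i w (Suc n)})"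
proof -
  let ?F = "first_passages N i w (Suc n)"
  have "s \<noteq> [] \<and> hd s \<in> ({1..N} - {i}) \<times> {-1, 1}" if "s \<in> ?F" for s
    using that by (cases s) (auto simp: first_passages_def valid_path_Cons mem_Times_iff)
  then have "sum (path_prob p i) ?F =
      (\<Sum>x\<in>({1..N} - {i}) \<times> {-1, 1}. \<Sum>t \<in> {t. x # t \<in> ?F}. path_prob p i (x # t))"
    by (intro sum_by_hd) (simp_all add: finite_first_passages)
  then show ?thesis
    unfolding sum.cartesian_product by (simp add: sum_distrib_left split_def)
qed

lemma hit_prob_0: "valid_path N i [(j, k)] \<Longrightarrow> hit_prob p N i j k 0 = 0"
  by (simp add: hit_prob_eq_first_passages first_passages_0)

lemma first_passages_Cons_same_colour:
  assumes "b \<in> {1..N} - {i, j}" "i \<in> {1..N}" "j \<in> {1..N}" "i \<noteq> j" "k \<in> {-1, 1}"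
  shows "{t. (b, k) # t \<in> first_passages N i [(j, k)] (Suc n)} = first_passages N b [(j, k)] n"
proof -
  have "valid_path N i [(b, k), (j, k)]" "reduce i [(b, k), (j, k)] = [(j, k)]"
    using assms by (auto simp: valid_path_Cons reduce_pair)
  then show ?thesis
    using first_passages_Cons[of N i "(b, k)" "[(j, k)]"] by simp
qed

lemma first_passages_Cons_opposite_colour:
  assumes "b \<in> {1..N} - {i}" "i \<in> {1..N}" "j \<in> {1..N}" "i \<noteq> j" "k \<in> {-1, 1}"
  shows "{t. (b, -k) # t \<in> first_passages N i [(j, k)] (Suc n)} =
    first_passages N b [(i, -k), (j, k)] n"
proof -
  have "k \<noteq> -k"
    using assms(5) by auto
  then have "valid_path N i [(b, -k), (i, -k), (j, k)]"
    and "reduce i [(b, -k), (i, -k), (j, k)] = [(j, k)]"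
    and "reduce b [(i, -k), (j, k)] = [(i, -k), (j, k)]"
    using assms by (auto simp: valid_path_Cons reduce_def reduce_step_def)
  then show ?thesis
    using first_passages_Cons[of N i "(b, -k)" "[(i, -k), (j, k)]"] by simp
qed

lemma hit_prob_Suc:
  assumes i: "i \<in> {1..N}" and j: "j \<in> {1..N}" and ij: "i \<noteq> j" and k: "k \<in> {-1, 1}"
  shows "hit_prob p N i j k (Suc n) =
    (if n = 0 then p i j k else 0)
    + (\<Sum>m\<in>{1..N} - {i, j}. p i m k * hit_prob p N m j k n)
    + (\<Sum>m\<in>{1..N} - {i}. p i m (-k) *
         (\<Sum>a\<le>n. hit_prob p N m i (-k) a * hit_prob p N i j k (n - a)))"
proof -
  let ?F = "first_passages N i [(j, k)] (Suc n)"
  define g where "g b k' = p i b k' * sum (path_prob p b) {t. (b, k') # t \<in> ?F}" for b k'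
  have "-k \<in> {-1, 1}"
    using k by auto
  have hit_prob: "hit_prob p N b c k' n' = sum (path_prob p b) (first_passages N b [(c, k')] n')"
    if "b \<in> {1..N}" "c \<in> {1..N}" "b \<noteq> c" "k' \<in> {-1, 1}" for b c k' n'
    using that by (intro hit_prob_eq_first_passages) (simp add: valid_path_Cons)
  have "hit_prob p N i j k (Suc n) = (\<Sum>b\<in>{1..N} - {i}. \<Sum>k'\<in>{-1, 1}. g b k')"
    unfolding hit_prob[OF i j ij k] g_def by (rule sum_first_passages_Suc)
  also have "\<dots> = g j k + (\<Sum>b\<in>{1..N} - {i, j}. g b k) + (\<Sum>b\<in>{1..N} - {i}. g b (-k))"
    using j ij k by (rule sum_row_split)
  also have "g j k = (if n = 0 then p i j k else 0)"
    using first_passages_single_Cons[of N i "(j, k)" n] i j ij k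
    by (simp add: g_def valid_path_Cons)
  also have "(\<Sum>b\<in>{1..N} - {i, j}. g b k) = (\<Sum>m\<in>{1..N} - {i, j}. p i m k * hit_prob p N m j k n)"
    using first_passages_Cons_same_colour[OF _ i j ij k] j k
    by (intro sum.cong refl) (simp add: g_def hit_prob)
  also have "(\<Sum>b\<in>{1..N} - {i}. g b (-k)) = (\<Sum>m\<in>{1..N} - {i}. p i m (-k) *
      (\<Sum>a\<le>n. hit_prob p N m i (-k) a * hit_prob p N i j k (n - a)))"
  proof (intro sum.cong refl)
    fix b
    assume b: "b \<in> {1..N} - {i}"
    have "valid_path N b [(i, -k), (j, k)]" "reduce b [(i, -k), (j, k)] = [(i, -k), (j, k)]"
      using b i j ij k by (auto simp: valid_path_Cons reduce_pair)
    then show "g b (-k) = p i b (-k) *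
        (\<Sum>a\<le>n. hit_prob p N b i (-k) a * hit_prob p N i j k (n - a))"
      using sum_first_passages_decompose[of N b "(i, -k)" "[(j, k)]" "(j, k)" "[]" p n]
        first_passages_Cons_opposite_colour[OF b i j ij k]
        hit_prob[of b i "-k"] hit_prob[OF i j ij k] b i \<open>-k \<in> {-1, 1}\<close>
      by (simp add: g_def)
  qed
  finally show ?thesis .
qed

section \<open>Generating functions\<close>

locale walk_weights =
  fixes N :: nat and p :: "nat \<Rightarrow> nat \<Rightarrow> int \<Rightarrow> real"
  assumes p_nonneg: "\<And>a b k. a \<in> {1..N} \<Longrightarrow> b \<in> {1..N} \<Longrightarrow> a \<noteq> b \<Longrightarrow> k \<in> {-1, 1} \<Longrightarrow> 0 \<le> p a b k"
    and p_row_sum: "\<And>a. a \<in> {1..N} \<Longrightarrow> (\<Sum>b\<in>{1..N} - {a}. \<Sum>k\<in>{-1, 1}. p a b k) = 1"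
begin

lemma path_prob_nonneg: "valid_path N i s \<Longrightarrow> 0 \<le> path_prob p i s"
  by (induction s arbitrary: i) (auto simp: valid_path_Cons p_nonneg)

lemma hit_prob_nonneg: "0 \<le> hit_prob p N i j k n"
  unfolding hit_prob_def by (rule sum_nonneg) (simp add: path_prob_nonneg)

lemma hit_prob_partial_sum_le_1:
  assumes "i \<in> {1..N}" "j \<in> {1..N}" "i \<noteq> j" "k \<in> {-1, 1}"
  shows "(\<Sum>n<M. hit_prob p N i j k n) \<le> 1"
  using assms
proof (induction M arbitrary: i j k)
  case (Suc M)
  let ?h = "hit_prob p N"
  have p_i: "0 \<le> p i m k'" if "m \<in> {1..N} - {i}" "k' \<in> {-1, 1}" for m k'
    using that Suc.prems(1) by (auto intro: p_nonneg)
  have "-k \<in> {-1, 1}"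
    using Suc.prems(4) by auto
  have direct: "(\<Sum>n<M. if n = 0 then p i j k else 0) \<le> p i j k"
    using p_i[of j k] Suc.prems by (cases M) (simp_all add: sum.lessThan_Suc_shift)
  have same: "(\<Sum>m\<in>{1..N} - {i, j}. p i m k * (\<Sum>n<M. ?h m j k n)) \<le> (\<Sum>m\<in>{1..N} - {i, j}. p i m k)"
    using Suc.IH p_i Suc.prems
    by (intro sum_mono mult_right_le_one_le) (auto intro: sum_nonneg hit_prob_nonneg)
  have convolution_le_1: "(\<Sum>n<M. \<Sum>a\<le>n. ?h m i (-k) a * ?h i j k (n - a)) \<le> 1"
    if "m \<in> {1..N} - {i}" for m
  proof -
    have "(\<Sum>n<M. \<Sum>a\<le>n. ?h m i (-k) a * ?h i j k (n - a)) \<le>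
        (\<Sum>a<M. ?h m i (-k) a) * (\<Sum>a<M. ?h i j k a)"
      by (intro sum_convolution_le_product hit_prob_nonneg)
    also have "\<dots> \<le> 1 * 1"
      using Suc.IH that Suc.prems \<open>-k \<in> {-1, 1}\<close>
      by (intro mult_mono) (auto intro: sum_nonneg hit_prob_nonneg)
    finally show ?thesis
      by simp
  qed
  have opposite: "(\<Sum>m\<in>{1..N} - {i}. p i m (-k) * (\<Sum>n<M. \<Sum>a\<le>n. ?h m i (-k) a * ?h i j k (n - a)))
      \<le> (\<Sum>m\<in>{1..N} - {i}. p i m (-k))"
    using convolution_le_1 p_i \<open>-k \<in> {-1, 1}\<close>
    by (intro sum_mono mult_right_le_one_le) (auto intro: sum_nonneg mult_nonneg_nonneg hit_prob_nonneg)
  have "(\<Sum>n<Suc M. ?h i j k n) = (\<Sum>n<M. ?h i j k (Suc n))"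
    using Suc.prems by (simp del: sum.lessThan_Suc add: sum.lessThan_Suc_shift hit_prob_0 valid_path_Cons)
  also have "\<dots> = (\<Sum>n<M. if n = 0 then p i j k else 0)
      + (\<Sum>m\<in>{1..N} - {i, j}. p i m k * (\<Sum>n<M. ?h m j k n))
      + (\<Sum>m\<in>{1..N} - {i}. p i m (-k) * (\<Sum>n<M. \<Sum>a\<le>n. ?h m i (-k) a * ?h i j k (n - a)))"
    using Suc.prems by (simp add: hit_prob_Suc sum.distrib sum_distrib_left sum.swap[of _ "{..<M}"])
  also have "\<dots> \<le> p i j k + (\<Sum>m\<in>{1..N} - {i, j}. p i m k) + (\<Sum>m\<in>{1..N} - {i}. p i m (-k))"
    using direct same opposite by (intro add_mono)
  also have "\<dots> = 1"
    using sum_row_split[where g = "p i" and i = i and j = j and k = k and N = N] p_row_sum Suc.prems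
    by simp
  finally show ?case .
qed simp

lemma summable_hit_prob_power:
  assumes x: "x \<in> {0..1}" and ijk: "i \<in> {1..N}" "j \<in> {1..N}" "i \<noteq> j" "k \<in> {-1, 1}"
  shows "summable (\<lambda>n. norm (hit_prob p N i j k n * x ^ n))"
proof (rule summable_comparison_test')
  show "summable (hit_prob p N i j k)"
    using hit_prob_partial_sum_le_1[OF ijk] hit_prob_nonneg by (intro summableI_nonneg_bounded)
  show "norm (norm (hit_prob p N i j k n * x ^ n)) \<le> hit_prob p N i j k n" for n
    using x hit_prob_nonneg[of i j k n] by (auto simp: abs_mult intro!: mult_left_le power_le_one)
qed

lemma hit_prob_power_sums:
  assumes "x \<in> {0..1}" "i \<in> {1..N}" "j \<in> {1..N}" "i \<noteq> j" "k \<in> {-1, 1}"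
  shows "(\<lambda>n. hit_prob p N i j k n * x ^ n) sums R p N i j k x"
  unfolding R_def using summable_norm_cancel[OF summable_hit_prob_power[OF assms]] by (rule summable_sums)

lemma hit_prob_Suc_power_sums:
  assumes x: "x \<in> {0..1}" and ijk: "i \<in> {1..N}" "j \<in> {1..N}" "i \<noteq> j" "k \<in> {-1, 1}"
  shows "(\<lambda>n. hit_prob p N i j k (Suc n) * x ^ n) sums
    (p i j k + (\<Sum>m\<in>{1..N} - {i, j}. p i m k * R p N m j k x)
     + (\<Sum>m\<in>{1..N} - {i}. p i m (-k) * (R p N m i (-k) x * R p N i j k x)))"
proof -
  have "-k \<in> {-1, 1}"
    using ijk(4) by auto
  have "(\<lambda>n. (if n = 0 then p i j k else 0)
      + (\<Sum>m\<in>{1..N} - {i, j}. p i m k * (hit_prob p N m j k n * x ^ n))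
      + (\<Sum>m\<in>{1..N} - {i}. p i m (-k) *
          ((\<Sum>a\<le>n. hit_prob p N m i (-k) a * hit_prob p N i j k (n - a)) * x ^ n))) sums
    (p i j k + (\<Sum>m\<in>{1..N} - {i, j}. p i m k * R p N m j k x)
     + (\<Sum>m\<in>{1..N} - {i}. p i m (-k) * (R p N m i (-k) x * R p N i j k x)))"
  proof (intro sums_add sums_sum sums_mult)
    show "(\<lambda>n. if n = 0 then p i j k else 0) sums p i j k"
      using sums_single[of 0 "\<lambda>_. p i j k"] by simp
  next
    fix m
    assume "m \<in> {1..N} - {i, j}"
    then show "(\<lambda>n. hit_prob p N m j k n * x ^ n) sums R p N m j k x"
      using x ijk by (intro hit_prob_power_sums) auto
  next
    fix m
    assume "m \<in> {1..N} - {i}"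
    then have mi: "m \<in> {1..N}" "i \<in> {1..N}" "m \<noteq> i" "-k \<in> {-1, 1}"
      using ijk \<open>-k \<in> {-1, 1}\<close> by auto
    show "(\<lambda>n. (\<Sum>a\<le>n. hit_prob p N m i (-k) a * hit_prob p N i j k (n - a)) * x ^ n) sums
        (R p N m i (-k) x * R p N i j k x)"
      using convolution_power_sums[OF summable_hit_prob_power[OF x mi] summable_hit_prob_power[OF x ijk]]
        hit_prob_power_sums[OF x mi] hit_prob_power_sums[OF x ijk]
      by (simp add: sums_iff)
  qed
  then show ?thesis
    by (rule sums_cong[THEN iffD1, rotated])
      (simp add: hit_prob_Suc[OF ijk] distrib_right sum_distrib_right mult.assoc)
qed

end

theorem proposition5p3:
  fixes N :: nat and p :: "nat \<Rightarrow> nat \<Rightarrow> int \<Rightarrow> real"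
  assumes N3: "N \<ge> 3"
    and p_pos: "\<And>a b k'. a \<in> {1..N} \<Longrightarrow> b \<in> {1..N} \<Longrightarrow> a \<noteq> b \<Longrightarrow> k' \<in> {-1, 1} \<Longrightarrow>
                 0 < p a b k' \<and> p a b k' < 1"
    and p_sum: "\<And>a. a \<in> {1..N} \<Longrightarrow> (\<Sum>b \<in> {1..N} - {a}. \<Sum>k' \<in> {-1, 1}. p a b k') = 1"
    and lam: "x \<in> {0..1}"
    and ij: "i \<in> {1..N}" "j \<in> {1..N}" "i \<noteq> j"
    and k: "k \<in> {-1, 1}"
  shows "R p N i j k x =
    x * (p i j k
         + (\<Sum>m \<in> {1..N} - {i, j}. p i m k * R p N m j k x)
         + (\<Sum>m \<in> {1..N} - {i}. p i m (-k) * R p N m i (-k) x * R p N i j k x))"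
proof -
  interpret walk_weights N p
    using p_pos p_sum by unfold_locales (auto intro: less_imp_le)
  let ?S = "p i j k + (\<Sum>m\<in>{1..N} - {i, j}. p i m k * R p N m j k x)
    + (\<Sum>m\<in>{1..N} - {i}. p i m (-k) * (R p N m i (-k) x * R p N i j k x))"
  have "(\<lambda>n. hit_prob p N i j k (Suc n) * x ^ Suc n) sums (x * ?S)"
    using sums_mult[OF hit_prob_Suc_power_sums[OF lam ij k], of x] by (simp add: mult_ac)
  then have "(\<lambda>n. hit_prob p N i j k n * x ^ n) sums (x * ?S + hit_prob p N i j k 0 * x ^ 0)"
    by (simp only: sums_Suc_iff[where f = "\<lambda>n. hit_prob p N i j k n * x ^ n"])
  then have "(\<lambda>n. hit_prob p N i j k n * x ^ n) sums (x * ?S)"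
    using ij k by (simp add: hit_prob_0 valid_path_Cons)
  then have "R p N i j k x = x * ?S"
    by (rule sums_unique2[OF hit_prob_power_sums[OF lam ij k]])
  then show ?thesis
    by (simp add: mult.assoc)
qed

end
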